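(* Let $N \ge 1$ and let $W_N$ be the set of binary words of length $N$. Define $\varphi_2 : W_N \to W_N$ by $\varphi_2(u) = 1^{p+1} v 11 v'$ if $u = 1^p v 111 v'$ where $p \geq 0$, $v'$ is a (possibly empty) word, and $v$ is a nonempty word whose first and last letters are $0$ and which does not contain $111$ as a contiguous subword; and $\varphi_2(u) = u$ otherwise. Then $|P(\varphi_2(u))| = |P(u)|$ for every $u \in W_N$.
   Context: For a binary word $x$, $x^j$ denotes $j$ concatenated copies of $x$, and juxtaposition denotes concatenation. For a binary word $w = w_1 \cdots w_\ell$ of length $\ell$, $P(w)$ is the set of indices $i \geq 2$ such that at least one of the following holds: (i) $\ell \geq i$ and $w_{i-1} w_i = 00$; (ii) $\ell \geq i+2$ and $w_{i-1} w_i w_{i+1} w_{i+2} = 0100$; (iii) $\ell \geq i+3$ and $w_{i-1} \cdots w_{i+3} = 01010$. *)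

theory Defs
  imports Main
begin

(* Binary words are lists of naturals with letters in {0,1}; positions are 1-based
   in the paper, so w_i is  w ! (i - 1). *)

definition W :: "nat \<Rightarrow> nat list set" where
  "W N = {w. length w = N \<and> set w \<subseteq> {0, 1}}"

definition P :: "nat list \<Rightarrow> nat set" where
  "P w = {i. 2 \<le> i \<and>
     ((length w \<ge> i \<and> w ! (i - 2) = 0 \<and> w ! (i - 1) = 0)
    \<or> (length w \<ge> i + 2 \<and> w ! (i - 2) = 0 \<and> w ! (i - 1) = 1 \<and> w ! i = 0 \<and> w ! (i + 1) = 0)
    \<or> (length w \<ge> i + 3 \<and> w ! (i - 2) = 0 \<and> w ! (i - 1) = 1 \<and> w ! i = 0
        \<and> w ! (i + 1) = 1 \<and> w ! (i + 2) = 0))}"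

definition contains_factor :: "nat list \<Rightarrow> nat list \<Rightarrow> bool" where
  "contains_factor x v \<longleftrightarrow> (\<exists>a b. v = a @ x @ b)"

definition good_v :: "nat list \<Rightarrow> bool" where
  "good_v v \<longleftrightarrow> v \<noteq> [] \<and> hd v = 0 \<and> last v = 0 \<and> \<not> contains_factor [1,1,1] v"

definition phi2_dec :: "nat list \<Rightarrow> nat \<Rightarrow> nat list \<Rightarrow> nat list \<Rightarrow> bool" where
  "phi2_dec u p v v' \<longleftrightarrow> u = replicate p 1 @ v @ [1,1,1] @ v' \<and> good_v v"

definition phi2 :: "nat list \<Rightarrow> nat list" where
  "phi2 u = (if \<exists>p v v'. phi2_dec u p v v'
             then (THE w. \<exists>p v v'. phi2_dec u p v v' \<and> w = replicate (p + 1) 1 @ v @ [1,1] @ v')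
             else u)"

end

theory Submission
  imports Defs
begin

text \<open>An index \<open>i\<close> lies in \<open>P w\<close> exactly when the suffix of \<open>w\<close> starting at position
  \<open>i - 1\<close> begins with one of the patterns 00, 0100, 01010, so \<open>|P w|\<close> counts pattern
  occurrences. No pattern contains 11 or starts with 1; hence in \<open>x 11 y\<close> the count splits
  as the count of \<open>x 11\<close> plus that of \<open>y\<close>, and a leading 1 contributes nothing. Writing
  \<open>u = (1\<^sup>p v) 1 1 (1 v')\<close> and \<open>\<phi>\<^sub>2(u) = (1 1\<^sup>p v) 1 1 v'\<close> the two counts agree. The conditions
  on \<open>v\<close> only serve to make the decomposition of \<open>u\<close>, and hence \<open>\<phi>\<^sub>2\<close>, well defined.\<close>

fun starts_pattern :: "nat list \<Rightarrow> bool" where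
  "starts_pattern (0 # 0 # _) = True"
| "starts_pattern (0 # Suc 0 # 0 # 0 # _) = True"
| "starts_pattern (0 # Suc 0 # 0 # Suc 0 # 0 # _) = True"
| "starts_pattern _ = False"

lemma P_ge_2: "i \<in> P w \<Longrightarrow> 2 \<le> i"
  by (simp add: P_def)

lemma two_in_P_iff: "2 \<in> P w \<longleftrightarrow> starts_pattern w"
  by (induction w rule: starts_pattern.induct) (auto simp: P_def)

lemma Suc_in_P_Cons_iff: "Suc (Suc (Suc k)) \<in> P (x # w) \<longleftrightarrow> Suc (Suc k) \<in> P w"
  by (simp add: P_def eval_nat_numeral)

lemma P_Cons: "P (x # w) = (if starts_pattern (x # w) then insert 2 (Suc ` P w) else Suc ` P w)"
proof (rule set_eqI)
  fix i
  consider "i < 2" | "i = 2" | k where "i = Suc (Suc (Suc k))"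
  proof (cases "i < 2 \<or> i = 2")
    case False
    then have "i = Suc (Suc (Suc (i - 3)))" by arith
    then show thesis using that(3) by blast
  qed (use that in blast)
  then show "i \<in> P (x # w) \<longleftrightarrow> i \<in> (if starts_pattern (x # w) then insert 2 (Suc ` P w) else Suc ` P w)"
  proof cases
    case 1 then show ?thesis by (auto dest: P_ge_2)
  next
    case 2 then show ?thesis by (auto simp: two_in_P_iff dest: P_ge_2)
  next
    case 3 then show ?thesis using Suc_in_P_Cons_iff by (simp add: image_iff)
  qed
qed

fun pattern_count :: "nat list \<Rightarrow> nat" where
  "pattern_count [] = 0"
| "pattern_count (x # w) = (if starts_pattern (x # w) then 1 else 0) + pattern_count w"

lemma finite_P: "finite (P w)"
  by (rule finite_subset[of _ "{..length w}"]) (auto simp: P_def)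

lemma card_P_eq_pattern_count: "card (P w) = pattern_count w"
proof (induction w)
  case Nil then show ?case by (simp add: P_def)
next
  case (Cons x w)
  have "2 \<notin> Suc ` P w" by (auto dest: P_ge_2)
  then show ?case using Cons finite_P[of w] by (simp add: P_Cons card_image)
qed

lemma starts_pattern_append_11: "starts_pattern (s @ 1 # 1 # r) = starts_pattern (s @ [1,1])"
  by (induction s rule: starts_pattern.induct) auto

lemma pattern_count_append_11:
  "pattern_count (xs @ 1 # 1 # r) = pattern_count (xs @ [1,1]) + pattern_count r"
proof (induction xs)
  case (Cons x xs)
  then show ?case using starts_pattern_append_11[of "x # xs" r] by simp
qed simp

lemma pattern_count_move_1_to_front:
  "pattern_count (1 # xs @ [1,1] @ ys) = pattern_count (xs @ [1,1,1] @ ys)"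
proof -
  have "pattern_count (1 # xs @ [1,1] @ ys) = pattern_count (xs @ [1,1]) + pattern_count ys"
    using pattern_count_append_11[of xs ys] by simp
  also have "\<dots> = pattern_count (xs @ 1 # 1 # 1 # ys)"
    using pattern_count_append_11[of xs "1 # ys"] by simp
  finally show ?thesis by simp
qed

lemma replicate_1_append_0_eq:
  "replicate p 1 @ 0 # a = replicate q 1 @ (0::nat) # b \<Longrightarrow> p = q \<and> a = b"
proof (induction p arbitrary: q)
  case 0 then show ?case by (cases q) auto
next
  case (Suc p) then show ?case by (cases q) auto
qed

lemma good_v_no_111_overlap:
  assumes "good_v (w @ us)" and "us @ [1,1,1] @ x = [1,1,1] @ y"
  shows "us = []"
proof (rule ccontr)
  assume "us \<noteq> []"
  with assms(2) consider "us = [1]" | "us = [1,1]" | r where "us = [1,1,1] @ r"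
    by (cases us; cases "tl us"; cases "tl (tl us)") auto
  then show False
    using assms(1) unfolding good_v_def contains_factor_def by cases auto
qed

lemma good_v_append_111_cancel:
  assumes "good_v v" and "good_v w" and "v @ [1,1,1] @ x = w @ [1,1,1] @ y"
  shows "v = w \<and> x = y"
proof -
  from assms(3) obtain us where
    "v = w @ us \<and> us @ [1,1,1] @ x = [1,1,1] @ y \<or> v @ us = w \<and> [1,1,1] @ x = us @ [1,1,1] @ y"
    unfolding append_eq_append_conv2 by blast
  then have "v = w"
    using good_v_no_111_overlap assms(1,2) by (metis append_Nil2)
  then show ?thesis using assms(3) by simp
qed

lemma phi2_dec_unique:
  assumes "phi2_dec u p v v'" and "phi2_dec u q w w'"
  shows "p = q \<and> v = w \<and> v' = w'"
proof -
  have "good_v v" and "good_v w" using assms by (simp_all add: phi2_dec_def)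
  then obtain a b where a: "v = 0 # a" and b: "w = 0 # b"
    unfolding good_v_def by (metis hd_Cons_tl)
  have "replicate p 1 @ 0 # a @ [1,1,1] @ v' = replicate q 1 @ 0 # b @ [1,1,1] @ w'"
    using assms a b by (simp add: phi2_dec_def)
  from replicate_1_append_0_eq[OF this] a b
  have "p = q" and "v @ [1,1,1] @ v' = w @ [1,1,1] @ w'" by simp_all
  then show ?thesis using good_v_append_111_cancel \<open>good_v v\<close> \<open>good_v w\<close> by blast
qed

lemma phi2_eq_if_phi2_dec:
  assumes "phi2_dec u p v v'"
  shows "phi2 u = 1 # replicate p 1 @ v @ [1,1] @ v'"
proof -
  have "(THE w. \<exists>p v v'. phi2_dec u p v v' \<and> w = replicate (p + 1) 1 @ v @ [1,1] @ v')
      = replicate (p + 1) 1 @ v @ [1,1] @ v'"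
    using assms phi2_dec_unique by (intro the_equality) blast+
  then show ?thesis using assms by (auto simp: phi2_def)
qed

lemma card_P_phi2: "card (P (phi2 u)) = card (P u)"
proof (cases "\<exists>p v v'. phi2_dec u p v v'")
  case True
  then obtain p v v' where dec: "phi2_dec u p v v'" by blast
  then have "u = (replicate p 1 @ v) @ [1,1,1] @ v'" by (simp add: phi2_dec_def)
  with phi2_eq_if_phi2_dec[OF dec] show ?thesis
    using pattern_count_move_1_to_front[of "replicate p 1 @ v" v']
    by (simp add: card_P_eq_pattern_count)
qed (simp add: phi2_def)

text \<open>The identity holds for every word.\<close>

theorem lemma4p2:
  fixes N :: nat and u :: "nat list"
  assumes "N \<ge> 1" and "u \<in> W N"
  shows "card (P (phi2 u)) = card (P u)"
  by (rule card_P_phi2)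

end
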